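(* Consider a linear Gaussian covariance model given by $\mathcal G=(G_0,\dots,G_r)$ and suppose the sample covariance matrix satisfies $S_n\succ 0$. Then the log-likelihood $\ell:\Theta_{\mathcal G}\to\mathbb{R}$, $\ell(v)=-\frac n2\log\det\Sigma_v-\frac n2\mathrm{tr}(S_n\Sigma_v^{-1})$, is strictly concave on the convex set $\Delta_{2S_n}=\{v\in\Theta_{\mathcal G}: 0\prec\Sigma_v\prec 2S_n\}$. In particular, maximizing $\ell$ over $\Delta_{2S_n}$ is a convex optimization problem.
   Context: $\mathbb{S}^p$ denotes real symmetric $p\times p$ matrices with inner product $\langle A,B\rangle=\mathrm{tr}(AB)$, $\mathbb{S}^p_{\succ0}$ the positive definite ones, and $A\succ B$ means $A-B$ is positive definite. A linear Gaussian covariance model is specified by $G_0,G_1,\dots,G_r\in\mathbb{S}^p$ with $G_1,\dots,G_r$ linearly independent and $\mathrm{tr}(G_0G_i)=0$ for $i=1,\dots,r$; for $v\in\mathbb{R}^r$ put $\Sigma_v=G_0+\sum_{i=1}^r v_iG_i$, and the parameter space is $\Theta_{\mathcal G}=\{v\in\mathbb{R}^r:\Sigma_v\in\mathbb{S}^p_{\succ0}\}$ (assumed nonempty). Given observations $X_1,\dots,X_n\in\mathbb{R}^p$, $\bar X=\frac1n\sum X_i$ and $S_n=\frac1n\sum_{i=1}^n(X_i-\bar X)(X_i-\bar X)^T$. *)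

theory Defs
  imports "HOL-Analysis.Analysis"
begin

definition sym_mat :: "real^'p^'p \<Rightarrow> bool" where
  "sym_mat A \<longleftrightarrow> transpose A = A"

definition pos_def :: "real^'p^'p \<Rightarrow> bool" where
  "pos_def A \<longleftrightarrow> sym_mat A \<and> (\<forall>x. x \<noteq> 0 \<longrightarrow> x \<bullet> (A *v x) > 0)"

definition loewner_less :: "real^'p^'p \<Rightarrow> real^'p^'p \<Rightarrow> bool" where
  "loewner_less A B \<longleftrightarrow> pos_def (B - A)"

definition outer :: "real^'p \<Rightarrow> real^'p \<Rightarrow> real^'p^'p" where
  "outer x y = (\<chi> a b. x $ a * y $ b)"

definition sample_mean :: "nat \<Rightarrow> (nat \<Rightarrow> real^'p) \<Rightarrow> real^'p" where
  "sample_mean n X = (1 / real n) *\<^sub>R (\<Sum>i\<in>{1..n}. X i)"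

definition sample_cov :: "nat \<Rightarrow> (nat \<Rightarrow> real^'p) \<Rightarrow> real^'p^'p" where
  "sample_cov n X = (1 / real n) *\<^sub>R
     (\<Sum>i\<in>{1..n}. outer (X i - sample_mean n X) (X i - sample_mean n X))"

definition Sigma :: "real^'p^'p \<Rightarrow> ('r::finite \<Rightarrow> real^'p^'p) \<Rightarrow> real^'r \<Rightarrow> real^'p^'p" where
  "Sigma G0 G v = G0 + (\<Sum>i\<in>UNIV. (v $ i) *\<^sub>R G i)"

definition Theta :: "real^'p^'p \<Rightarrow> ('r::finite \<Rightarrow> real^'p^'p) \<Rightarrow> (real^'r) set" where
  "Theta G0 G = {v. pos_def (Sigma G0 G v)}"

definition Delta2 :: "real^'p^'p \<Rightarrow> ('r::finite \<Rightarrow> real^'p^'p) \<Rightarrow> real^'p^'p \<Rightarrow> (real^'r) set" where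
  "Delta2 G0 G S = {v \<in> Theta G0 G. loewner_less 0 (Sigma G0 G v)
                      \<and> loewner_less (Sigma G0 G v) (2 *\<^sub>R S)}"

definition loglik :: "nat \<Rightarrow> real^'p^'p \<Rightarrow> real^'p^'p \<Rightarrow> ('r::finite \<Rightarrow> real^'p^'p) \<Rightarrow> real^'r \<Rightarrow> real" where
  "loglik n S G0 G v = - (real n / 2) * ln (det (Sigma G0 G v))
                       - (real n / 2) * trace (S ** matrix_inv (Sigma G0 G v))"

definition strictly_concave_on :: "'a::real_vector set \<Rightarrow> ('a \<Rightarrow> real) \<Rightarrow> bool" where
  "strictly_concave_on A f \<longleftrightarrow>
     (\<forall>x\<in>A. \<forall>y\<in>A. \<forall>t. x \<noteq> y \<and> 0 < t \<and> t < 1 \<longrightarrow>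
        f ((1 - t) *\<^sub>R x + t *\<^sub>R y) > (1 - t) * f x + t * f y)"

end

theory Submission
  imports Defs
begin

(*
  Restrict the log-likelihood to a segment S(t) = (1-t) A + t B between two points of Delta_2S.
  Simultaneously diagonalise A and B by A-orthonormal generalised eigenvectors w_i,
  B w_i = lam_i A w_i, obtained by successively maximising Rayleigh quotients.  Along the segment
    ln det S(t) + tr (S_n S(t)^-1) = sum_i psi_(c_i) (1 - t + t lam_i) - ln (det [w_1 ... w_p])^2
  with c_i = w_i' S_n w_i and psi_c(u) = ln u + c/u.  Since 0 < S(t) < 2 S_n, every argument lies
  in (0, 2 c_i), where psi_c is strictly convex, and A <> B forces some lam_i <> 1.
*)

lemma sym_mat_iff: "sym_mat M \<longleftrightarrow> (\<forall>i j. M $ i $ j = M $ j $ i)"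
  by (auto simp: sym_mat_def transpose_def vec_eq_iff)

lemma sym_mat_inner_commute:
  fixes A :: "real^'p^'p"
  assumes "sym_mat A"
  shows "x \<bullet> (A *v y) = y \<bullet> (A *v x)"
proof -
  have "x \<bullet> (A *v y) = (x v* A) \<bullet> y" by (simp add: dot_lmul_matrix)
  also have "x v* A = A *v x"
    using assms unfolding sym_mat_def by (metis vector_transpose_matrix)
  finally show ?thesis by (simp add: inner_commute)
qed

lemma continuous_on_quadratic_form:
  "continuous_on S (\<lambda>x::real^'p. x \<bullet> ((A::real^'p^'p) *v x))"
  unfolding inner_vec_def matrix_vector_mult_def by (intro continuous_intros)

lemma pos_def_convex_comb:
  fixes A B :: "real^'p^'p"
  assumes "pos_def A" "pos_def B" "0 \<le> t" "t \<le> 1"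
  shows "pos_def ((1-t) *\<^sub>R A + t *\<^sub>R B)"
proof -
  have "sym_mat ((1-t) *\<^sub>R A + t *\<^sub>R B)"
    using assms unfolding pos_def_def sym_mat_iff by simp
  moreover have "x \<bullet> (((1-t) *\<^sub>R A + t *\<^sub>R B) *v x) > 0" if "x \<noteq> 0" for x
  proof -
    have "x \<bullet> (A *v x) > 0" "x \<bullet> (B *v x) > 0"
      using assms that unfolding pos_def_def by auto
    moreover have "x \<bullet> (((1-t) *\<^sub>R A + t *\<^sub>R B) *v x) = (1-t) * (x \<bullet> (A *v x)) + t * (x \<bullet> (B *v x))"
      by (simp add: matrix_vector_mult_add_rdistrib scaleR_matrix_vector_assoc[symmetric] inner_add_right)
    ultimately show ?thesis
      using assms by (smt (verit) mult_nonneg_nonneg mult_pos_pos)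
  qed
  ultimately show ?thesis unfolding pos_def_def by blast
qed

lemma linear_coeff_zero_if_quadratic_nonpos:
  fixes a b :: real
  assumes "\<And>s. 2 * s * a + s^2 * b \<le> 0"
  shows "a = 0"
proof (rule ccontr)
  assume "a \<noteq> 0"
  define s where "s = a / (\<bar>b\<bar> + 1)"
  have a_eq: "a = s * (\<bar>b\<bar> + 1)" by (simp add: s_def add_pos_nonneg)
  have "s \<noteq> 0" using \<open>a \<noteq> 0\<close> a_eq by auto
  have "0 < s^2 * (\<bar>b\<bar> + 2)" using \<open>s \<noteq> 0\<close> by (simp add: add_pos_nonneg)
  also have "\<dots> = 2 * s * a - s^2 * \<bar>b\<bar>"
    by (simp add: a_eq power2_eq_square algebra_simps)
  also have "\<dots> \<le> 2 * s * a + s^2 * b"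
    using mult_left_mono[OF abs_ge_minus_self[of b], of "s^2"] by simp
  finally show False using assms[of s] by simp
qed

lemma rayleigh_quotient_max_on_subspace:
  fixes A B :: "real^'p^'p"
  assumes pdA: "pos_def A" and W: "subspace W" and z: "z \<in> W" "z \<noteq> 0"
  obtains w0 \<mu> where "w0 \<in> W" "w0 \<noteq> 0"
    "\<And>x. x \<in> W \<Longrightarrow> x \<bullet> (B *v x) \<le> \<mu> * (x \<bullet> (A *v x))"
    "w0 \<bullet> (B *v w0) = \<mu> * (w0 \<bullet> (A *v w0))"
proof -
  have Apos: "x \<noteq> 0 \<Longrightarrow> x \<bullet> (A *v x) > 0" for x using pdA unfolding pos_def_def by auto
  define R where "R x = (x \<bullet> (B *v x)) / (x \<bullet> (A *v x))" for x
  define K where "K = sphere 0 1 \<inter> W"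
  have "compact K"
    unfolding K_def using closed_subspace[OF W] by (simp add: compact_Int_closed)
  moreover have "continuous_on K R"
  proof -
    have "x \<bullet> (A *v x) \<noteq> 0" if "x \<in> K" for x
      using that Apos[of x] unfolding K_def by fastforce
    then show ?thesis
      unfolding R_def by (intro continuous_on_divide continuous_on_quadratic_form) auto
  qed
  moreover have "(1 / norm z) *\<^sub>R z \<in> K"
    unfolding K_def using z W by (simp add: subspace_scale)
  ultimately obtain w0 where w0: "w0 \<in> K" and max: "\<And>x. x \<in> K \<Longrightarrow> R x \<le> R w0"
    using continuous_attains_sup[of K R] by blast
  have bound: "x \<bullet> (B *v x) \<le> R w0 * (x \<bullet> (A *v x))" if "x \<in> W" for x
  proof (cases "x = 0")
    case False
    have "R ((1 / norm x) *\<^sub>R x) = R x"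
      unfolding R_def using False
      by (simp add: matrix_vector_mult_scaleR inner_scaleR_left inner_scaleR_right)
    moreover have "(1 / norm x) *\<^sub>R x \<in> K" unfolding K_def using False that W by (simp add: subspace_scale)
    ultimately have "R x \<le> R w0" using max by metis
    then show ?thesis using Apos[OF False] unfolding R_def by (simp add: field_simps)
  qed simp
  show ?thesis
  proof (rule that[of w0 "R w0"])
    show "w0 \<in> W" "w0 \<noteq> 0" using w0 unfolding K_def by auto
    then show "w0 \<bullet> (B *v w0) = R w0 * (w0 \<bullet> (A *v w0))"
      using Apos unfolding R_def by (simp add: less_imp_neq[symmetric])
  qed (rule bound)
qed

lemma quadratic_form_stationary_at_max:
  fixes E :: "real^'p^'p"
  assumes "sym_mat E" "subspace W" and nonpos: "\<And>x. x \<in> W \<Longrightarrow> x \<bullet> (E *v x) \<le> 0"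
    and "w0 \<in> W" "w0 \<bullet> (E *v w0) = 0" "y \<in> W"
  shows "y \<bullet> (E *v w0) = 0"
proof (rule linear_coeff_zero_if_quadratic_nonpos)
  fix s :: real
  have "(w0 + s *\<^sub>R y) \<bullet> (E *v (w0 + s *\<^sub>R y)) \<le> 0"
    using assms by (intro nonpos) (simp add: subspace_add subspace_scale)
  moreover have "(w0 + s *\<^sub>R y) \<bullet> (E *v (w0 + s *\<^sub>R y)) =
      w0 \<bullet> (E *v w0) + 2 * s * (y \<bullet> (E *v w0)) + s^2 * (y \<bullet> (E *v y))"
    using sym_mat_inner_commute[OF \<open>sym_mat E\<close>, of w0 y]
    by (simp add: matrix_vector_right_distrib matrix_vector_mult_scaleR inner_add_left
        inner_add_right power2_eq_square algebra_simps)
  ultimately show "2 * s * (y \<bullet> (E *v w0)) + s^2 * (y \<bullet> (E *v y)) \<le> 0"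
    using assms by simp
qed

lemma A_orthonormal_projection_residual:
  fixes A :: "real^'p^'p"
  assumes "sym_mat A" "finite I" "k \<in> I"
    and norm: "\<And>i. i \<in> I \<Longrightarrow> w i \<bullet> (A *v w i) = 1"
    and orth: "\<And>i j. i \<in> I \<Longrightarrow> j \<in> I \<Longrightarrow> i \<noteq> j \<Longrightarrow> w i \<bullet> (A *v w j) = 0"
  shows "(A *v w k) \<bullet> (y - (\<Sum>j\<in>I. (w j \<bullet> (A *v y)) *\<^sub>R w j)) = 0"
proof -
  have "(A *v w k) \<bullet> (\<Sum>j\<in>I. (w j \<bullet> (A *v y)) *\<^sub>R w j)
      = (\<Sum>j\<in>I. if j = k then w k \<bullet> (A *v y) else 0)"
    unfolding inner_sum_right
  proof (rule sum.cong[OF refl])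
    fix j assume "j \<in> I"
    then show "(A *v w k) \<bullet> ((w j \<bullet> (A *v y)) *\<^sub>R w j) = (if j = k then w k \<bullet> (A *v y) else 0)"
      using norm[of k] orth[of j k] \<open>k \<in> I\<close> by (auto simp: inner_commute)
  qed
  also have "\<dots> = w k \<bullet> (A *v y)"
    using \<open>finite I\<close> \<open>k \<in> I\<close> by simp
  also have "\<dots> = (A *v w k) \<bullet> y"
    using sym_mat_inner_commute[OF \<open>sym_mat A\<close>, of "w k" y] by (simp add: inner_commute)
  finally show ?thesis by (simp add: inner_diff_right)
qed

lemma exists_nonzero_orthogonal_to_family:
  fixes v :: "'i \<Rightarrow> real^'p"
  assumes "finite I" "card I < CARD('p)"
  obtains z where "z \<noteq> 0" "\<And>j. j \<in> I \<Longrightarrow> v j \<bullet> z = 0"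
proof -
  have "dim (v ` I) \<le> card (v ` I)" using assms(1) by (simp add: dim_le_card')
  also have "\<dots> \<le> card I" using assms(1) by (rule card_image_le)
  finally have "dim (v ` I) < DIM(real^'p)" using assms(2) by simp
  then obtain z where "z \<noteq> 0" and z: "\<And>y. y \<in> span (v ` I) \<Longrightarrow> orthogonal z y"
    by (rule orthogonal_to_subspace_exists) blast
  show ?thesis
    by (rule that[OF \<open>z \<noteq> 0\<close>]) (use z[OF span_base[OF imageI]] in \<open>simp add: orthogonal_def inner_commute\<close>)
qed

lemma eq_0_if_orthogonal_to_A_orthonormal_family_and_complement:
  fixes A :: "real^'p^'p"
  assumes "sym_mat A" "finite I"
    and norm: "\<And>i. i \<in> I \<Longrightarrow> w i \<bullet> (A *v w i) = 1"
    and orth: "\<And>i j. i \<in> I \<Longrightarrow> j \<in> I \<Longrightarrow> i \<noteq> j \<Longrightarrow> w i \<bullet> (A *v w j) = 0"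
    and on_complement: "\<And>y. (\<forall>j\<in>I. (A *v w j) \<bullet> y = 0) \<Longrightarrow> y \<bullet> e = 0"
    and on_family: "\<And>j. j \<in> I \<Longrightarrow> w j \<bullet> e = 0"
  shows "e = 0"
proof -
  define r where "r = e - (\<Sum>j\<in>I. (w j \<bullet> (A *v e)) *\<^sub>R w j)"
  have "r \<bullet> e = 0"
    unfolding r_def by (rule on_complement) (auto intro: A_orthonormal_projection_residual[OF assms(1-2) _ norm orth])
  moreover have "e \<bullet> e = r \<bullet> e + (\<Sum>j\<in>I. (w j \<bullet> (A *v e)) * (w j \<bullet> e))"
    by (simp add: r_def inner_diff_left inner_sum_left)
  ultimately show ?thesis using on_family by simp
qed

text \<open>A maximiser \<open>w\<^sub>0\<close> of the Rayleigh quotient \<open>x\<^sup>TBx / x\<^sup>TAx\<close> on the \<open>A\<close>-orthogonal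
  complement \<open>W\<close> of the family is stationary, so \<open>(B - \<mu>A)w\<^sub>0\<close> is orthogonal to \<open>W\<close>; the
  eigen-relations make it orthogonal to the family as well, hence it vanishes.\<close>

lemma gen_eigvec_A_orthogonal_to_family:
  fixes A B :: "real^'p^'p" and I :: "'p set"
  assumes pdA: "pos_def A" and sB: "sym_mat B" and card: "card I < CARD('p)"
    and eig: "\<And>i. i \<in> I \<Longrightarrow> B *v w i = lam i *\<^sub>R (A *v w i)"
    and norm: "\<And>i. i \<in> I \<Longrightarrow> w i \<bullet> (A *v w i) = 1"
    and orth: "\<And>i j. i \<in> I \<Longrightarrow> j \<in> I \<Longrightarrow> i \<noteq> j \<Longrightarrow> w i \<bullet> (A *v w j) = 0"
  obtains v \<mu> where "B *v v = \<mu> *\<^sub>R (A *v v)" "v \<bullet> (A *v v) = 1"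
    "\<And>j. j \<in> I \<Longrightarrow> w j \<bullet> (A *v v) = 0"
proof -
  have sA: "sym_mat A" using pdA unfolding pos_def_def by auto
  define W where "W = {x. \<forall>j\<in>I. (A *v w j) \<bullet> x = 0}"
  have W: "subspace W"
    unfolding W_def subspace_def by (simp add: inner_add_right)
  have WD: "x \<in> W \<Longrightarrow> j \<in> I \<Longrightarrow> w j \<bullet> (A *v x) = 0" for x j
    using sym_mat_inner_commute[OF sA, of "w j" x] unfolding W_def by (simp add: inner_commute)
  obtain z where "z \<noteq> 0" "\<And>j. j \<in> I \<Longrightarrow> (A *v w j) \<bullet> z = 0"
    using exists_nonzero_orthogonal_to_family[OF finite card, where v="\<lambda>j. A *v w j"] by blast
  then have "z \<in> W" unfolding W_def by simp
  then obtain w0 \<mu> where "w0 \<in> W" "w0 \<noteq> 0"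
    and max: "\<And>x. x \<in> W \<Longrightarrow> x \<bullet> (B *v x) \<le> \<mu> * (x \<bullet> (A *v x))"
    and at_w0: "w0 \<bullet> (B *v w0) = \<mu> * (w0 \<bullet> (A *v w0))"
    by (rule rayleigh_quotient_max_on_subspace[OF pdA W _ \<open>z \<noteq> 0\<close>]) blast
  define E where "E = B - \<mu> *\<^sub>R A"
  have sE: "sym_mat E" using sA sB unfolding E_def sym_mat_iff by simp
  have Ev: "E *v x = B *v x - \<mu> *\<^sub>R (A *v x)" for x
    unfolding E_def by (simp add: matrix_vector_mult_diff_rdistrib scaleR_matrix_vector_assoc)
  have on_W: "y \<bullet> (E *v w0) = 0" if "y \<in> W" for y
  proof (rule quadratic_form_stationary_at_max[OF sE W _ \<open>w0 \<in> W\<close> _ that])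
    show "x \<bullet> (E *v x) \<le> 0" if "x \<in> W" for x
      using max[OF that] by (simp add: Ev inner_diff_right)
    show "w0 \<bullet> (E *v w0) = 0"
      using at_w0 by (simp add: Ev inner_diff_right)
  qed
  have on_family: "w j \<bullet> (E *v w0) = 0" if "j \<in> I" for j
  proof -
    have "w j \<bullet> (B *v w0) = w0 \<bullet> (B *v w j)" by (rule sym_mat_inner_commute[OF sB])
    also have "\<dots> = lam j * (w0 \<bullet> (A *v w j))" by (simp add: eig[OF that])
    also have "w0 \<bullet> (A *v w j) = w j \<bullet> (A *v w0)" by (rule sym_mat_inner_commute[OF sA])
    finally show ?thesis
      using WD[OF \<open>w0 \<in> W\<close> that] by (simp add: Ev inner_diff_right)
  qed
  have "E *v w0 = 0"
    using on_W on_family unfolding W_def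
    by (intro eq_0_if_orthogonal_to_A_orthonormal_family_and_complement[OF sA finite norm orth]) auto
  then have eig_w0: "B *v w0 = \<mu> *\<^sub>R (A *v w0)" by (simp add: Ev)
  define d where "d = w0 \<bullet> (A *v w0)"
  have "d > 0" using pdA \<open>w0 \<noteq> 0\<close> unfolding d_def pos_def_def by auto
  show ?thesis
  proof (rule that[of "(1 / sqrt d) *\<^sub>R w0" \<mu>])
    show "B *v ((1 / sqrt d) *\<^sub>R w0) = \<mu> *\<^sub>R (A *v ((1 / sqrt d) *\<^sub>R w0))"
      by (simp add: matrix_vector_mult_scaleR eig_w0)
    show "(1 / sqrt d) *\<^sub>R w0 \<bullet> (A *v ((1 / sqrt d) *\<^sub>R w0)) = 1"
      using \<open>d > 0\<close> by (simp add: matrix_vector_mult_scaleR d_def[symmetric] power2_eq_square[symmetric])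
    show "w j \<bullet> (A *v ((1 / sqrt d) *\<^sub>R w0)) = 0" if "j \<in> I" for j
      using WD[OF \<open>w0 \<in> W\<close> that] by (simp add: matrix_vector_mult_scaleR)
  qed
qed

lemma A_orthonormal_gen_eigvecs_exist:
  fixes A B :: "real^'p^'p" and I :: "'p set"
  assumes pdA: "pos_def A" and sB: "sym_mat B"
  shows "\<exists>w lam. \<forall>i\<in>I. B *v w i = lam i *\<^sub>R (A *v w i) \<and> w i \<bullet> (A *v w i) = 1
           \<and> (\<forall>j\<in>I. j \<noteq> i \<longrightarrow> w i \<bullet> (A *v w j) = 0)"
proof (induction I rule: finite_induct[OF finite])
  case (2 k F)
  then obtain w lam where
      eig: "\<And>i. i \<in> F \<Longrightarrow> B *v w i = lam i *\<^sub>R (A *v w i)"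
    and norm: "\<And>i. i \<in> F \<Longrightarrow> w i \<bullet> (A *v w i) = 1"
    and orth: "\<And>i j. i \<in> F \<Longrightarrow> j \<in> F \<Longrightarrow> i \<noteq> j \<Longrightarrow> w i \<bullet> (A *v w j) = 0"
    by metis
  have "card F < card (insert k F)" using 2 by simp
  also have "\<dots> \<le> CARD('p)" by (rule card_mono) auto
  finally obtain v \<mu> where v: "B *v v = \<mu> *\<^sub>R (A *v v)" "v \<bullet> (A *v v) = 1"
      and v_orth: "\<And>j. j \<in> F \<Longrightarrow> w j \<bullet> (A *v v) = 0"
    using gen_eigvec_A_orthogonal_to_family[OF pdA sB _, where w=w and lam=lam, OF _ eig norm orth]
    by blast
  have v_orth': "v \<bullet> (A *v w j) = 0" if "j \<in> F" for j
    using v_orth[OF that] sym_mat_inner_commute[of A v "w j"] pdA unfolding pos_def_def by simp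
  show ?case
    by (rule exI[of _ "w(k := v)"], rule exI[of _ "lam(k := \<mu>)"])
      (use 2 eig norm orth v v_orth v_orth' in auto)
qed simp

lemma simultaneous_diagonalization:
  fixes A B :: "real^'p^'p"
  assumes "pos_def A" "sym_mat B"
  obtains w :: "'p \<Rightarrow> real^'p" and lam
  where "\<And>i. B *v w i = lam i *\<^sub>R (A *v w i)"
    and "\<And>i j. w i \<bullet> (A *v w j) = (if i = j then 1 else 0)"
proof -
  obtain w :: "'p \<Rightarrow> real^'p" and lam where wl: "\<forall>i\<in>UNIV. B *v w i = lam i *\<^sub>R (A *v w i)
      \<and> w i \<bullet> (A *v w i) = 1 \<and> (\<forall>j\<in>UNIV. j \<noteq> i \<longrightarrow> w i \<bullet> (A *v w j) = 0)"
    using A_orthonormal_gen_eigvecs_exist[OF assms, of UNIV] by blast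
  show ?thesis
  proof (rule that[of w lam])
    show "B *v w i = lam i *\<^sub>R (A *v w i)" for i using wl by blast
    show "w i \<bullet> (A *v w j) = (if i = j then 1 else 0)" for i j using wl by (cases "i = j") simp_all
  qed
qed

definition colmat :: "('p \<Rightarrow> real^'p) \<Rightarrow> real^'p^'p" where
  "colmat w = (\<chi> a b. w b $ a)"

definition dmat :: "('p \<Rightarrow> real) \<Rightarrow> real^'p^'p" where
  "dmat u = (\<chi> i j. if i = j then u i else 0)"

lemma matrix_mult_colmat: "(M ** colmat w) $ a $ b = (M *v w b) $ a"
  by (simp add: matrix_matrix_mult_def matrix_vector_mult_def colmat_def)

lemma transpose_colmat_congruence:
  "(transpose (colmat w) ** M ** colmat w) $ i $ j = w i \<bullet> (M *v w j)"
proof -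
  have "(transpose (colmat w) ** M ** colmat w) $ i $ j
      = (\<Sum>k\<in>UNIV. \<Sum>l\<in>UNIV. w i $ l * M $ l $ k * w j $ k)"
    by (simp add: matrix_matrix_mult_def transpose_def colmat_def sum_distrib_right)
  also have "\<dots> = (\<Sum>l\<in>UNIV. \<Sum>k\<in>UNIV. w i $ l * M $ l $ k * w j $ k)"
    by (rule sum.swap)
  also have "\<dots> = w i \<bullet> (M *v w j)"
    by (simp add: inner_vec_def matrix_vector_mult_def sum_distrib_left mult.assoc)
  finally show ?thesis .
qed

lemma dmat_mult: "dmat u ** dmat v = dmat (\<lambda>i. u i * v i)"
proof -
  have "(\<Sum>k\<in>UNIV. (if i = k then u i else 0) * (if k = j then v k else 0))
      = (\<Sum>k\<in>UNIV. if k = i then (if i = j then u i * v i else 0) else 0)" for i j :: 'a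
    by (rule sum.cong) auto
  then show ?thesis unfolding dmat_def by (simp add: matrix_matrix_mult_def vec_eq_iff)
qed

lemma trace_mult_dmat: "trace (Y ** dmat u) = (\<Sum>i\<in>UNIV. Y $ i $ i * u i)"
  unfolding dmat_def trace_def
  by (simp add: matrix_matrix_mult_def if_distrib sum.delta' cong: if_cong)

lemma det_dmat: "det (dmat u) = (\<Prod>i\<in>UNIV. u i)"
  by (subst det_diagonal) (auto simp: dmat_def)

lemma matrix_inv_unique:
  fixes M X :: "real^'p^'p"
  assumes "M ** X = mat 1" "X ** M = mat 1"
  shows "matrix_inv M = X"
proof -
  have "\<exists>Y. M ** Y = mat 1 \<and> Y ** M = mat 1" using assms by blast
  then have inv: "M ** matrix_inv M = mat 1 \<and> matrix_inv M ** M = mat 1"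
    unfolding matrix_inv_def by (rule someI_ex)
  have "matrix_inv M = matrix_inv M ** (M ** X)" using assms by (simp add: matrix_mul_rid)
  also have "\<dots> = (matrix_inv M ** M) ** X" by (simp add: matrix_mul_assoc)
  also have "\<dots> = X" using inv by (simp add: matrix_mul_lid)
  finally show ?thesis .
qed

lemma congruent_diagonal_det:
  fixes M :: "real^'p^'p" and w :: "'p \<Rightarrow> real^'p"
  assumes "\<And>i j. w i \<bullet> (M *v w j) = (if i = j then u i else 0)"
  shows "(det (colmat w))^2 * det M = (\<Prod>i\<in>UNIV. u i)"
proof -
  have "transpose (colmat w) ** M ** colmat w = dmat u"
    by (simp add: vec_eq_iff transpose_colmat_congruence assms dmat_def)
  then have "det (transpose (colmat w) ** M ** colmat w) = (\<Prod>i\<in>UNIV. u i)"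
    by (simp add: det_dmat)
  then show ?thesis by (simp add: det_mul det_transpose power2_eq_square algebra_simps)
qed

lemma congruent_diagonal_ln_det:
  fixes M :: "real^'p^'p" and w :: "'p \<Rightarrow> real^'p"
  assumes "\<And>i j. w i \<bullet> (M *v w j) = (if i = j then u i else 0)" and "\<And>i. u i > 0"
  shows "ln (det M) = (\<Sum>i\<in>UNIV. ln (u i)) - ln ((det (colmat w))^2)"
proof -
  have prod_pos: "(\<Prod>i\<in>UNIV. u i) > 0" using assms(2) by (simp add: prod_pos)
  have "det (colmat w) \<noteq> 0"
  proof
    assume "det (colmat w) = 0"
    with congruent_diagonal_det[OF assms(1)] prod_pos show False by (simp del: prod_zero_iff)
  qed
  then have "(det (colmat w))^2 > 0" by simp
  moreover have "det M = (\<Prod>i\<in>UNIV. u i) / (det (colmat w))^2"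
    using congruent_diagonal_det[OF assms(1)] calculation by (simp add: field_simps)
  ultimately show ?thesis
    using prod_pos ln_prod[of UNIV u] assms(2)[THEN less_imp_neq, symmetric] by (simp add: ln_div del: prod_zero_iff)
qed

lemma congruent_diagonal_trace_inv:
  fixes M S :: "real^'p^'p" and w :: "'p \<Rightarrow> real^'p"
  assumes wM: "\<And>i j. w i \<bullet> (M *v w j) = (if i = j then u i else 0)" and u: "\<And>i. u i > 0"
  shows "trace (S ** matrix_inv M) = (\<Sum>i\<in>UNIV. (w i \<bullet> (S *v w i)) / u i)"
proof -
  define P where "P = colmat w"
  define D' where "D' = dmat (\<lambda>i. 1 / u i)"
  have TMP: "transpose P ** M ** P = dmat u"
    unfolding P_def by (simp add: vec_eq_iff transpose_colmat_congruence wM dmat_def)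
  \<comment> \<open>\<open>M\<^sup>-\<^sup>1 = P D\<^sup>-\<^sup>1 P\<^sup>T\<close> is read off from \<open>P\<^sup>T M P = D\<close>\<close>
  have "(transpose P ** M) ** (P ** D') = dmat u ** D'"
    using TMP by (simp add: matrix_mul_assoc)
  also have "\<dots> = mat 1"
    unfolding D'_def dmat_mult using u by (simp add: dmat_def mat_def vec_eq_iff less_imp_neq[symmetric])
  finally have "(transpose P ** M) ** (P ** D') = mat 1" .
  then have "(P ** D') ** (transpose P ** M) = mat 1"
    using matrix_left_right_inverse by blast
  then have XM: "(P ** D' ** transpose P) ** M = mat 1" by (simp add: matrix_mul_assoc)
  then have "M ** (P ** D' ** transpose P) = mat 1" using matrix_left_right_inverse by blast
  then have "matrix_inv M = P ** D' ** transpose P" using XM by (rule matrix_inv_unique)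
  then have "trace (S ** matrix_inv M) = trace ((transpose P ** S ** P) ** D')"
    by (simp add: matrix_mul_assoc trace_mul_sym[of _ "transpose P"])
  also have "\<dots> = (\<Sum>i\<in>UNIV. (w i \<bullet> (S *v w i)) / u i)"
    unfolding D'_def trace_mult_dmat P_def by (simp add: transpose_colmat_congruence)
  finally show ?thesis .
qed

lemma eq_if_gen_eigvals_one:
  fixes A B :: "real^'p^'p" and w :: "'p \<Rightarrow> real^'p"
  assumes "\<And>i j. w i \<bullet> (A *v w j) = (if i = j then 1 else 0)" and "\<And>i. B *v w i = A *v w i"
  shows "B = A"
proof -
  define P where "P = colmat w"
  have "(transpose P ** A) ** P = mat 1"
    unfolding P_def by (simp add: vec_eq_iff transpose_colmat_congruence assms(1) mat_def)
  then have PI: "P ** (transpose P ** A) = mat 1"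
    using matrix_left_right_inverse by blast
  have BP: "B ** P = A ** P"
    unfolding P_def by (simp add: vec_eq_iff matrix_mult_colmat assms(2))
  have "B = B ** (P ** (transpose P ** A))" using PI by (simp add: matrix_mul_rid)
  also have "\<dots> = (B ** P) ** (transpose P ** A)" by (simp add: matrix_mul_assoc)
  also have "\<dots> = A ** (P ** (transpose P ** A))" using BP by (simp add: matrix_mul_assoc)
  also have "\<dots> = A" using PI by (simp add: matrix_mul_rid)
  finally show ?thesis .
qed

lemma strict_convex_ineq_if_deriv_strict_mono:
  fixes f f' :: "real \<Rightarrow> real"
  assumes "a < b" "0 < t" "t < 1"
    and der: "\<And>x. a \<le> x \<Longrightarrow> x \<le> b \<Longrightarrow> (f has_real_derivative f' x) (at x)"
    and mono: "\<And>x y. a < x \<Longrightarrow> x < y \<Longrightarrow> y < b \<Longrightarrow> f' x < f' y"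
  shows "f ((1-t)*a + t*b) < (1-t) * f a + t * f b"
proof -
  define m where "m = (1-t)*a + t*b"
  have ma: "m - a = t*(b-a)" and bm: "b - m = (1-t)*(b-a)"
    unfolding m_def by (simp_all add: algebra_simps)
  have "0 < t*(b-a)" using assms(1,2) by simp
  then have "a < m" using ma by linarith
  have "0 < (1-t)*(b-a)" using assms(1,3) by simp
  then have "m < b" using bm by linarith
  obtain z1 where z1: "a < z1" "z1 < m" "f m - f a = (m - a) * f' z1"
    using MVT2[OF \<open>a < m\<close>, of f f'] der \<open>m < b\<close> by auto
  obtain z2 where z2: "m < z2" "z2 < b" "f b - f m = (b - m) * f' z2"
    using MVT2[OF \<open>m < b\<close>, of f f'] der \<open>a < m\<close> by auto
  have "(1-t) * f a + t * f b - f m = t * (f b - f m) - (1-t) * (f m - f a)"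
    by (simp add: algebra_simps)
  also have "\<dots> = t * (1-t) * (b-a) * (f' z2 - f' z1)"
    unfolding z1(3) z2(3) ma bm by (simp add: algebra_simps)
  also have "\<dots> > 0"
    using assms(1-3) mono[of z1 z2] z1 z2 by (intro mult_pos_pos) auto
  finally show ?thesis unfolding m_def by simp
qed

lemma ln_plus_inverse_has_derivative:
  fixes c x :: real
  assumes "x > 0"
  shows "((\<lambda>u. ln u + c / u) has_real_derivative (1/x - c/x^2)) (at x)"
  using assms by (auto intro!: derivative_eq_intros simp: power2_eq_square field_simps)

lemma ln_plus_inverse_deriv_strict_mono:
  fixes x y c :: real
  assumes "0 < x" "x < y" "y < 2*c"
  shows "1/x - c/x^2 < 1/y - c/y^2"
proof -
  have key: "x*y < c*(x+y)"
  proof (cases "y \<le> c")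
    case True
    then have "x*(y-c) \<le> 0" using assms by (simp add: mult_nonneg_nonpos)
    moreover have "c*y > 0" using assms True by simp
    ultimately show ?thesis by (simp add: algebra_simps)
  next
    case False
    then have "x*(y-c) < y*(y-c)" using assms by (intro mult_strict_right_mono) auto
    moreover have "y*(y-c) < y*c" using assms False by (intro mult_strict_left_mono) auto
    ultimately show ?thesis by (simp add: algebra_simps)
  qed
  have "(1/y - c/y^2) - (1/x - c/x^2) = (y-x)*(c*(x+y) - x*y)/(x^2*y^2)"
    using assms by (simp add: field_simps power2_eq_square)
  also have "\<dots> > 0"
    using assms key by (intro divide_pos_pos mult_pos_pos) auto
  finally show ?thesis by simp
qed

text \<open>The second derivative of \<open>u \<mapsto> ln u + c/u\<close> is \<open>(2c - u)/u\<^sup>3\<close>: this is where the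
  bound \<open>\<Sigma> \<prec> 2S\<close> enters.\<close>

lemma ln_plus_inverse_strict_convex:
  fixes a b c t :: real
  assumes "0 < a" "0 < b" "a < 2*c" "b < 2*c" "a \<noteq> b" "0 < t" "t < 1"
  shows "ln ((1-t)*a + t*b) + c/((1-t)*a + t*b) < (1-t)*(ln a + c/a) + t*(ln b + c/b)"
proof -
  have ordered: "ln ((1-s)*x + s*y) + c/((1-s)*x + s*y) < (1-s)*(ln x + c/x) + s*(ln y + c/y)"
    if "0 < x" "x < y" "y < 2*c" "0 < s" "s < 1" for x y s
  proof (rule strict_convex_ineq_if_deriv_strict_mono[OF \<open>x < y\<close> \<open>0 < s\<close> \<open>s < 1\<close>])
    show "((\<lambda>u. ln u + c/u) has_real_derivative 1/u - c/u^2) (at u)" if "x \<le> u" for u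
      using that \<open>0 < x\<close> by (intro ln_plus_inverse_has_derivative) simp
    show "1/u - c/u^2 < 1/v - c/v^2" if "x < u" "u < v" "v < y" for u v
      using that \<open>0 < x\<close> \<open>y < 2*c\<close> by (intro ln_plus_inverse_deriv_strict_mono) simp_all
  qed
  show ?thesis
  proof (cases "a < b")
    case True
    then show ?thesis using ordered assms by simp
  next
    case False
    then have "b < a" using assms(5) by simp
    with ordered[of b a "1-t"] assms show ?thesis by (simp add: algebra_simps)
  qed
qed

lemma ln_plus_inverse_convex:
  fixes a b c t :: real
  assumes "0 < a" "0 < b" "a < 2*c" "b < 2*c" "0 < t" "t < 1"
  shows "ln ((1-t)*a + t*b) + c/((1-t)*a + t*b) \<le> (1-t)*(ln a + c/a) + t*(ln b + c/b)"
proof (cases "a = b")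
  case True
  have "(1-t) * y + t * y = y" for y :: real by (simp add: algebra_simps)
  with True show ?thesis by simp
next
  case False
  with assms show ?thesis using ln_plus_inverse_strict_convex[of a b c t] by simp
qed

lemma ln_det_plus_trace_inv_gen_eigenbasis:
  fixes A B S :: "real^'p^'p" and w :: "'p \<Rightarrow> real^'p"
  assumes eig: "\<And>i. B *v w i = lam i *\<^sub>R (A *v w i)"
    and orth: "\<And>i j. w i \<bullet> (A *v w j) = (if i = j then 1 else 0)"
    and pd: "pos_def ((1-s) *\<^sub>R A + s *\<^sub>R B)"
  shows "ln (det ((1-s) *\<^sub>R A + s *\<^sub>R B)) + trace (S ** matrix_inv ((1-s) *\<^sub>R A + s *\<^sub>R B))
    = (\<Sum>i\<in>UNIV. ln (1 - s + s * lam i) + (w i \<bullet> (S *v w i)) / (1 - s + s * lam i))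
      - ln ((det (colmat w))^2)"
proof -
  define u where "u i = 1 - s + s * lam i" for i
  have wM: "w i \<bullet> (((1-s) *\<^sub>R A + s *\<^sub>R B) *v w j) = (if i = j then u i else 0)" for i j
    using orth[of i j]
    by (simp add: u_def eig matrix_vector_mult_add_rdistrib scaleR_matrix_vector_assoc[symmetric]
        inner_add_right algebra_simps)
  have "u i > 0" for i
    using pd orth[of i i] wM[of i i] unfolding pos_def_def by (metis zero_neq_one inner_zero_left)
  then show ?thesis
    using congruent_diagonal_ln_det[OF wM] congruent_diagonal_trace_inv[OF wM]
    by (simp add: u_def sum.distrib)
qed

lemma ln_det_plus_trace_inv_strict_convex:
  fixes A B S :: "real^'p^'p"
  assumes pdA: "pos_def A" and pdB: "pos_def B"
    and bdA: "pos_def (2 *\<^sub>R S - A)" and bdB: "pos_def (2 *\<^sub>R S - B)"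
    and "A \<noteq> B" "0 < t" "t < 1"
  shows "ln (det ((1-t) *\<^sub>R A + t *\<^sub>R B)) + trace (S ** matrix_inv ((1-t) *\<^sub>R A + t *\<^sub>R B))
    < (1-t) * (ln (det A) + trace (S ** matrix_inv A)) + t * (ln (det B) + trace (S ** matrix_inv B))"
proof -
  have "sym_mat B" using pdB unfolding pos_def_def by simp
  then obtain w :: "'p \<Rightarrow> real^'p" and lam
    where eig: "\<And>i. B *v w i = lam i *\<^sub>R (A *v w i)"
      and orth: "\<And>i j. w i \<bullet> (A *v w j) = (if i = j then 1 else 0)"
    using simultaneous_diagonalization[OF pdA] by metis
  define c where "c i = w i \<bullet> (S *v w i)" for i
  define \<phi> where "\<phi> X = ln (det X) + trace (S ** matrix_inv X)" for X :: "real^'p^'p"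
  define \<psi> where "\<psi> i x = ln x + c i / x" for i x
  have bounds: "0 < lam i" "1 < 2 * c i" "lam i < 2 * c i" for i
  proof -
    have "w i \<noteq> 0" using orth[of i i] by auto
    moreover have "w i \<bullet> (A *v w i) = 1" "w i \<bullet> (B *v w i) = lam i" by (simp_all add: eig orth)
    ultimately show "0 < lam i" "1 < 2 * c i" "lam i < 2 * c i"
      using pdB bdA bdB unfolding pos_def_def
      by (auto simp: c_def matrix_vector_mult_diff_rdistrib scaleR_matrix_vector_assoc[symmetric]
          inner_diff_right)
  qed
  have pdt: "pos_def ((1-t) *\<^sub>R A + t *\<^sub>R B)"
    using pdA pdB assms(6,7) by (intro pos_def_convex_comb) simp_all
  have \<phi>_eq: "\<phi> ((1-s) *\<^sub>R A + s *\<^sub>R B) = (\<Sum>i\<in>UNIV. \<psi> i ((1-s) * 1 + s * lam i)) - ln ((det (colmat w))^2)"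
    if "pos_def ((1-s) *\<^sub>R A + s *\<^sub>R B)" for s
    using ln_det_plus_trace_inv_gen_eigenbasis[OF eig orth that, of S]
    by (simp add: \<phi>_def \<psi>_def c_def)
  have "\<exists>k. lam k \<noteq> 1"
  proof (rule ccontr)
    assume "\<nexists>k. lam k \<noteq> 1"
    then have "B = A" using eq_if_gen_eigvals_one[OF orth] eig by simp
    with \<open>A \<noteq> B\<close> show False by simp
  qed
  moreover have "\<psi> i ((1-t) * 1 + t * lam i) \<le> (1-t) * \<psi> i 1 + t * \<psi> i (lam i)" for i
    unfolding \<psi>_def using bounds[of i] assms(6,7) by (intro ln_plus_inverse_convex) auto
  moreover have "\<psi> i ((1-t) * 1 + t * lam i) < (1-t) * \<psi> i 1 + t * \<psi> i (lam i)" if "lam i \<noteq> 1" for i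
    unfolding \<psi>_def using bounds[of i] assms(6,7) that by (intro ln_plus_inverse_strict_convex) auto
  ultimately have "(\<Sum>i\<in>UNIV. \<psi> i ((1-t) * 1 + t * lam i)) < (\<Sum>i\<in>UNIV. (1-t) * \<psi> i 1 + t * \<psi> i (lam i))"
    by (intro sum_strict_mono_ex1) auto
  also have "\<dots> = (1-t) * (\<Sum>i\<in>UNIV. \<psi> i 1) + t * (\<Sum>i\<in>UNIV. \<psi> i (lam i))"
    by (simp add: sum.distrib sum_distrib_left)
  finally have sum_less: "(\<Sum>i\<in>UNIV. \<psi> i ((1-t) * 1 + t * lam i))
      < (1-t) * (\<Sum>i\<in>UNIV. \<psi> i 1) + t * (\<Sum>i\<in>UNIV. \<psi> i (lam i))" .
  have \<phi>A: "\<phi> A = (\<Sum>i\<in>UNIV. \<psi> i 1) - ln ((det (colmat w))^2)" using \<phi>_eq[of 0] pdA by simp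
  have \<phi>B: "\<phi> B = (\<Sum>i\<in>UNIV. \<psi> i (lam i)) - ln ((det (colmat w))^2)" using \<phi>_eq[of 1] pdB by simp
  have "\<phi> ((1-t) *\<^sub>R A + t *\<^sub>R B) < (1-t) * \<phi> A + t * \<phi> B"
    unfolding \<phi>_eq[OF pdt] \<phi>A \<phi>B using sum_less by (simp add: algebra_simps)
  then show ?thesis unfolding \<phi>_def .
qed

lemma Sigma_convex_comb:
  "Sigma G0 G ((1-t) *\<^sub>R x + t *\<^sub>R y) = (1-t) *\<^sub>R Sigma G0 G x + t *\<^sub>R Sigma G0 G y"
proof -
  have sum_eq: "(\<Sum>i\<in>UNIV. ((1-t) *\<^sub>R x + t *\<^sub>R y) $ i *\<^sub>R G i)
      = (1-t) *\<^sub>R (\<Sum>i\<in>UNIV. x $ i *\<^sub>R G i) + t *\<^sub>R (\<Sum>i\<in>UNIV. y $ i *\<^sub>R G i)"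
    by (simp add: scaleR_add_left sum.distrib scaleR_sum_right)
  have "G0 = (1-t) *\<^sub>R G0 + t *\<^sub>R G0" by (simp add: scaleR_add_left[symmetric])
  then show ?thesis
    unfolding Sigma_def sum_eq by (subst (1) \<open>G0 = _\<close>) (simp add: scaleR_add_right algebra_simps)
qed

lemma Sigma_inj:
  assumes "\<And>c. (\<Sum>i\<in>UNIV. c i *\<^sub>R G i) = 0 \<Longrightarrow> (\<forall>i. c i = 0)"
    and "Sigma G0 G x = Sigma G0 G y"
  shows "x = y"
proof -
  have "(\<Sum>i\<in>UNIV. (x $ i - y $ i) *\<^sub>R G i) = 0"
    using assms(2) unfolding Sigma_def by (simp add: scaleR_diff_left sum_subtractf)
  then have "\<forall>i. x $ i - y $ i = 0" by (rule assms(1))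
  then show ?thesis by (simp add: vec_eq_iff)
qed

lemma mem_Delta2_iff:
  "v \<in> Delta2 G0 G S \<longleftrightarrow> pos_def (Sigma G0 G v) \<and> pos_def (2 *\<^sub>R S - Sigma G0 G v)"
  unfolding Delta2_def Theta_def loewner_less_def by auto

lemma convex_Delta2: "convex (Delta2 G0 G S)"
  unfolding convex_alt
proof (intro ballI allI impI)
  fix x y and t :: real
  assume "x \<in> Delta2 G0 G S" "y \<in> Delta2 G0 G S" "0 \<le> t \<and> t \<le> 1"
  moreover have "2 *\<^sub>R S - Sigma G0 G ((1-t) *\<^sub>R x + t *\<^sub>R y)
      = (1-t) *\<^sub>R (2 *\<^sub>R S - Sigma G0 G x) + t *\<^sub>R (2 *\<^sub>R S - Sigma G0 G y)"
    unfolding Sigma_convex_comb by (simp add: algebra_simps)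
  ultimately show "(1-t) *\<^sub>R x + t *\<^sub>R y \<in> Delta2 G0 G S"
    unfolding mem_Delta2_iff Sigma_convex_comb by (simp add: pos_def_convex_comb)
qed

lemma loglik_strictly_concave_on_Delta2:
  assumes "\<And>c. (\<Sum>i\<in>UNIV. c i *\<^sub>R G i) = 0 \<Longrightarrow> (\<forall>i. c i = 0)" and "n > 0"
  shows "strictly_concave_on (Delta2 G0 G S) (loglik n S G0 G)"
  unfolding strictly_concave_on_def
proof (intro ballI allI impI)
  fix x y and t :: real
  assume x: "x \<in> Delta2 G0 G S" and y: "y \<in> Delta2 G0 G S" and xyt: "x \<noteq> y \<and> 0 < t \<and> t < 1"
  define f where "f v = ln (det (Sigma G0 G v)) + trace (S ** matrix_inv (Sigma G0 G v))" for v
  have "Sigma G0 G x \<noteq> Sigma G0 G y" using Sigma_inj[OF assms(1)] xyt by blast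
  with x y xyt have "f ((1-t) *\<^sub>R x + t *\<^sub>R y) < (1-t) * f x + t * f y"
    unfolding f_def Sigma_convex_comb mem_Delta2_iff by (intro ln_det_plus_trace_inv_strict_convex) auto
  then have "(real n / 2) * f ((1-t) *\<^sub>R x + t *\<^sub>R y) < (real n / 2) * ((1-t) * f x + t * f y)"
    using \<open>n > 0\<close> by (intro mult_strict_left_mono) simp_all
  moreover have "loglik n S G0 G v = - (real n / 2) * f v" for v
    unfolding loglik_def f_def by (simp add: algebra_simps)
  ultimately show "(1-t) * loglik n S G0 G x + t * loglik n S G0 G y
      < loglik n S G0 G ((1-t) *\<^sub>R x + t *\<^sub>R y)"
    by (simp add: algebra_simps)
qed

lemma sample_cov_pos_def_imp_pos:
  fixes X :: "nat \<Rightarrow> real^'p"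
  assumes "pos_def (sample_cov n X)"
  shows "n > 0"
proof (rule ccontr)
  assume "\<not> n > 0"
  then have "sample_cov n X = 0" by (simp add: sample_cov_def)
  moreover have "(\<chi> i. 1) \<noteq> (0::real^'p)" by (simp add: vec_eq_iff)
  ultimately show False using assms unfolding pos_def_def
    by (metis inner_zero_right less_irrefl matrix_vector_mult_0)
qed

text \<open>Symmetry of the \<open>G\<^sub>i\<close>, the trace condition and \<open>\<Theta> \<noteq> {}\<close> are part of the model but
  not needed; positivity of \<open>S\<^sub>n\<close> is used only to exclude \<open>n = 0\<close>.\<close>

theorem mainTheorem2:
  fixes G0 :: "real^'p^'p" and G :: "'r::finite \<Rightarrow> real^'p^'p"
    and n :: nat and X :: "nat \<Rightarrow> real^'p"
  assumes "sym_mat G0" and "\<And>i. sym_mat (G i)"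
    and "\<And>c. (\<Sum>i\<in>UNIV. c i *\<^sub>R G i) = 0 \<Longrightarrow> (\<forall>i. c i = 0)"
    and "\<And>i. trace (G0 ** G i) = 0"
    and "Theta G0 G \<noteq> {}"
    and "pos_def (sample_cov n X)"
  shows "convex (Delta2 G0 G (sample_cov n X))
    \<and> strictly_concave_on (Delta2 G0 G (sample_cov n X)) (loglik n (sample_cov n X) G0 G)"
  using convex_Delta2 loglik_strictly_concave_on_Delta2[OF assms(3) sample_cov_pos_def_imp_pos[OF assms(6)]]
  by blast

end
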